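(* Consider the stochastic tandem network TSC(St) described in the context, with $\rho^*=\lambda/\mu_{\min}<1$ and finite variances $\sigma_a^2,\sigma_{s,j}^2$. Let $$\Gamma=\max_j\Big(\sqrt{2}\sigma_a\Gamma_{a,\mathrm{LIL}},\ \sqrt{2}\sigma_{s,j}\Gamma_{s,j,\mathrm{LIL}},\ e^{2e}\lambda^{-1}\Big).$$ Then for every $n\ge 1$, $$\mathbb{E}[W_n]\le \mathbb{E}\Big[\frac{7J^2\Gamma^2\lambda}{1-\rho^*}\ln\ln\frac{J\lambda\Gamma}{1-\rho^*}\Big]+J\lambda^{-1}.$$ If moreover $\lim_{n\to\infty}\mathbb{E}[W_n]=\mathbb{E}[W_\infty]$, then the same upper bound holds for $\mathbb{E}[W_\infty]$.
   Context: $\phi(x)=\sqrt{x\ln\ln x}$ for $x\ge e^e$ and $\phi(x)=1$ otherwise. TSC(St): single-server stations $S_1,\dots,S_J$ in tandem, initially empty, infinite buffers, FIFO at each station; jobs arrive to $S_1$ with i.i.d. interarrival times $U_1,U_2,\dots$ (mean $\lambda^{-1}$, variance $\sigma_a^2$); job $k$ requires service $V^j_k$ at $S_j$, with $(V^j_k)_{k\ge1}$ i.i.d. (mean $\mu_j^{-1}$, variance $\sigma_{s,j}^2$), all sequences mutually independent; jobs visit $S_1,\dots,S_J$ in order. $\mu_{\min}=\min_j\mu_j$. $W_n$ is the sojourn time (arrival at $S_1$ to departure from $S_J$) of job $n$; $W_\infty$ is its steady-state version. For an i.i.d. zero-mean sequence $(X_k)$ with variance $\sigma^2$, its LIL constant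 is $\Gamma_{\mathrm{LIL}}=\sup_{m\ge1}\frac{|\sum_{k=1}^m X_k|}{\sigma\sqrt2\,\phi(m)}$ (finite a.s.); $\Gamma_{a,\mathrm{LIL}}$ and $\Gamma_{s,j,\mathrm{LIL}}$ are these constants for the centered sequences $U_k-\lambda^{-1}$ and $V^j_k-\mu_j^{-1}$ (in the paper, taken along the reversed order of the first $n$ jobs, which has the same distribution). *)

theory Defs
  imports "HOL-Probability.Probability"
begin

definition phi :: "real \<Rightarrow> real" where
  "phi x = (if x \<ge> exp (exp 1) then sqrt (x * ln (ln x)) else 1)"

text \<open>LIL constant of a (1-indexed) sequence X with standard deviation sigma:
  sup over m >= 1 of |X 1 + ... + X m| / (sigma sqrt 2 phi(m)), taken in ennreal
  (so it is always well defined; it is finite a.s. by the LIL).\<close>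
definition lil_const :: "(nat \<Rightarrow> real) \<Rightarrow> real \<Rightarrow> ennreal" where
  "lil_const X \<sigma> = (SUP m\<in>{1..}. ennreal (\<bar>\<Sum>k=1..m. X k\<bar> / (\<sigma> * sqrt 2 * phi (real m))))"

text \<open>Departure time of job k (k >= 1) from station j (1 <= j <= J) in the tandem network;
  station 0 stands for arrival: dep U V 0 k = U 1 + ... + U k is the arrival time of job k.
  The network is initially empty (dep U V j 0 = 0 for j >= 1), FIFO, single server:
  D_j(k) = max(D_{j-1}(k), D_j(k-1)) + V^j_k.\<close>
fun dep :: "(nat \<Rightarrow> real) \<Rightarrow> (nat \<Rightarrow> nat \<Rightarrow> real) \<Rightarrow> nat \<Rightarrow> nat \<Rightarrow> real" where
  "dep U V 0 k = (\<Sum>i=1..k. U i)"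
| "dep U V (Suc j) 0 = 0"
| "dep U V (Suc j) (Suc k) = max (dep U V j (Suc k)) (dep U V (Suc j) k) + V (Suc j) (Suc k)"

definition sojourn :: "nat \<Rightarrow> (nat \<Rightarrow> real) \<Rightarrow> (nat \<Rightarrow> nat \<Rightarrow> real) \<Rightarrow> nat \<Rightarrow> real" where
  "sojourn J U V n = dep U V J n - dep U V 0 n"

definition tandem_bound :: "nat \<Rightarrow> real \<Rightarrow> real \<Rightarrow> ennreal \<Rightarrow> ennreal" where
  "tandem_bound J lam \<rho> \<Gamma> =
     (if \<Gamma> = \<top> then \<top>
      else (let \<gamma> = enn2real \<Gamma> in
        ennreal (7 * (real J)\<^sup>2 * \<gamma>\<^sup>2 * lam / (1 - \<rho>) * ln (ln (real J * lam * \<gamma> / (1 - \<rho>))))))"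

end

theory Submission
  imports Defs
begin

text \<open>
  Pathwise, unrolling the max-plus recursion of departure times shows that the
  sojourn time of job \<open>n\<close> is at most \<open>J/\<lambda> + 3 J G phi(m+1) - m (1 - \<rho>)/\<lambda>\<close> for some \<open>m\<close>,
  provided every tail sum of the interarrival and service sequences deviates from its mean
  by at most \<open>G phi\<close>; an elementary inequality for \<open>phi\<close> then bounds this uniformly in \<open>m\<close>.
  The required tail deviations are supplied by the LIL constants, but of the sequences read
  backwards from job \<open>n\<close>; since the data are i.i.d. and independent, reversing the first
  \<open>n\<close> jobs does not change the expected sojourn time, which turns the pathwise bound
  into the stated bound on expectations.
\<close>

lemma exp1_gt: "exp 1 > (27/10::real)"
  using e_approx_32 by (simp add: abs_if split: if_split_asm)

lemma exp_2e_ge_36: "exp (2 * exp 1) \<ge> (36::real)"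
proof -
  have "(27/10::real) ^ 5 \<le> exp 1 ^ 5"
    using exp1_gt by (intro power_mono) auto
  also have "exp 1 ^ 5 = exp (5::real)" by (simp add: exp_of_nat_mult[symmetric])
  also have "\<dots> \<le> exp (2 * exp 1)" using exp1_gt by simp
  finally show ?thesis by (simp add: power_divide)
qed

lemma ln_ln_ge_1:
  fixes y :: real
  assumes "y \<ge> exp (exp 1)"
  shows "y \<ge> 1" and "ln y \<ge> exp 1" and "ln (ln y) \<ge> 1"
proof -
  show "y \<ge> 1" using assms by (smt (verit) exp_ge_zero one_le_exp_iff)
  then show ln_y: "ln y \<ge> exp 1" using assms by (metis exp_le_cancel_iff exp_ln less_le_trans zero_less_one)
  then have "ln y > 0" using exp_gt_zero[of 1] by linarith
  with ln_y show "ln (ln y) \<ge> 1" by (metis exp_le_cancel_iff exp_ln)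
qed

lemma phi_ge_1: "phi x \<ge> 1"
proof (cases "x \<ge> exp (exp 1)")
  case True
  with ln_ln_ge_1[OF True] have "1 * 1 \<le> x * ln (ln x)"
    by (intro mult_mono) auto
  with True show ?thesis by (simp add: phi_def)
qed (simp add: phi_def)

lemma phi_pos: "phi x > 0"
  using phi_ge_1[of x] by linarith

lemma phi_mono:
  assumes "x \<le> y" shows "phi x \<le> phi y"
proof (cases "x \<ge> exp (exp 1)")
  case False
  then show ?thesis using phi_ge_1[of y] by (simp add: phi_def)
next
  case True
  note x = ln_ln_ge_1[OF True] and y = ln_ln_ge_1[OF order_trans[OF True assms]]
  have "ln x \<le> ln y" using assms x(1) by simp
  moreover have "ln x > 0" using x(2) exp_gt_zero[of 1] by linarith
  ultimately have "ln (ln x) \<le> ln (ln y)" by simp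
  then have "x * ln (ln x) \<le> y * ln (ln y)"
    using assms x by (intro mult_mono) auto
  with True assms show ?thesis by (simp add: phi_def)
qed

lemma large_constant_facts:
  fixes K :: real
  assumes "K \<ge> exp (2 * exp 1)"
  shows "K \<ge> 36" and "ln K \<ge> 4" and "ln (ln K) \<ge> ln 4" and "ln (ln K) \<ge> 1"
proof -
  show K36: "K \<ge> 36" using assms exp_2e_ge_36 by linarith
  have "ln K \<ge> 2 * exp 1" using assms K36 by (metis exp_le_cancel_iff exp_ln less_le_trans zero_less_numeral)
  then show lnK: "ln K \<ge> 4" using exp1_gt by linarith
  then show "ln (ln K) \<ge> ln 4" by simp
  moreover have "ln (4::real) \<ge> 1" using ln3_gt_1 by (smt (verit) ln_le_cancel_iff)
  ultimately show "ln (ln K) \<ge> 1" by linarith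
qed

text \<open>For moderate \<open>x \<le> K^4\<close> the term \<open>3 K phi x\<close> is absorbed by AM-GM, since then
  \<open>ln (ln x) \<le> 2 ln (ln K)\<close>.\<close>
lemma three_K_phi_moderate:
  fixes K x :: real
  assumes K: "K \<ge> exp (2 * exp 1)" and x: "x \<ge> exp (exp 1)" and small: "x \<le> K ^ 4"
  shows "3 * K * phi x \<le> x + 9/2 * K\<^sup>2 * ln (ln K)"
proof -
  define L where "L = ln (ln x)"
  note Kf = large_constant_facts[OF K] and xf = ln_ln_ge_1[OF x]
  have "ln x \<le> ln (K ^ 4)" using small xf(1) Kf(1) by (subst ln_le_cancel_iff) auto
  also have "ln (K ^ 4) = 4 * ln K" using Kf(1) by (simp add: ln_realpow)
  moreover have "ln x > 0" using xf(2) exp_gt_zero[of 1] by linarith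
  ultimately have "L \<le> ln (4 * ln K)"
    using Kf(2) unfolding L_def by (subst ln_le_cancel_iff) auto
  also have "ln (4 * ln K) = ln 4 + ln (ln K)" using Kf(2) by (simp add: ln_mult)
  finally have L_le: "L \<le> 2 * ln (ln K)" using Kf(3) by linarith
  have "0 \<le> (sqrt x - 3/2 * K * sqrt L)\<^sup>2" by simp
  also have "\<dots> = x + 9/4 * K\<^sup>2 * L - 3 * K * (sqrt x * sqrt L)"
    using xf(1) xf(3) by (simp add: L_def power2_eq_square algebra_simps)
  finally have "3 * K * sqrt (x * L) \<le> x + 9/4 * K\<^sup>2 * L" by (simp add: real_sqrt_mult)
  moreover have "K\<^sup>2 * L \<le> K\<^sup>2 * (2 * ln (ln K))" using L_le by (intro mult_left_mono) auto
  ultimately show ?thesis using x by (simp add: phi_def L_def)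
qed

text \<open>Writing \<open>x = y^4\<close> with \<open>y > K \<ge> 36\<close>, one has \<open>9 ln (ln x) \<le> 36 y \<le> y^2\<close>.\<close>
lemma three_K_phi_large:
  fixes K x :: real
  assumes K: "K \<ge> 36" and x: "x \<ge> exp (exp 1)" and large: "x > K ^ 4"
  shows "3 * K * phi x \<le> x"
proof -
  define L where "L = ln (ln x)"
  define y where "y = sqrt (sqrt x)"
  note xf = ln_ln_ge_1[OF x]
  have y_pos: "y > 0" using xf(1) by (simp add: y_def)
  have "y * y = sqrt x" using xf(1) by (simp add: y_def)
  then have y4: "y ^ 4 = x"
  proof -
    assume yy: "y * y = sqrt x"
    have "y ^ 4 = (y * y) * (y * y)" by (simp only: power4_eq_xxxx mult.assoc)
    also have "\<dots> = x" using yy xf(1) by simp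
    finally show ?thesis .
  qed
  have Ky: "K < y"
  proof (rule ccontr)
    assume "\<not> K < y"
    then have "y ^ 4 \<le> K ^ 4" using y_pos by (intro power_mono) auto
    then show False using large y4 by simp
  qed
  have "ln x = 4 * ln y" using y4 y_pos by (metis ln_realpow of_nat_numeral)
  also have "\<dots> \<le> 4 * y - 4" using ln_le_minus_one[OF y_pos] by simp
  finally have "ln x \<le> 4 * y - 4" .
  moreover have "L \<le> ln x - 1"
    using xf(2) exp_gt_zero[of 1] unfolding L_def by (intro ln_le_minus_one) linarith
  ultimately have "L \<le> 4 * y" by linarith
  moreover have "36 * y \<le> y * y" using Ky K y_pos by (intro mult_right_mono) auto
  ultimately have "9 * L \<le> y\<^sup>2" by (simp add: power2_eq_square)
  moreover have "K\<^sup>2 \<le> y\<^sup>2" using Ky K by (intro power_mono) auto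
  ultimately have "K\<^sup>2 * (9 * L) \<le> y\<^sup>2 * y\<^sup>2"
    using xf(3) L_def by (intro mult_mono) auto
  also have "y\<^sup>2 * y\<^sup>2 = x" using y4 by (simp add: power2_eq_square power4_eq_xxxx)
  finally have "9 * K\<^sup>2 * L * x \<le> x * x" using xf(1) by (intro mult_right_mono) auto
  then have "(3 * K)\<^sup>2 * (x * L) \<le> x\<^sup>2" by (simp add: power2_eq_square algebra_simps)
  then have "sqrt ((3 * K)\<^sup>2 * (x * L)) \<le> sqrt (x\<^sup>2)" by (rule real_sqrt_le_mono)
  then show ?thesis using K xf(1) x by (simp add: phi_def L_def real_sqrt_mult)
qed

text \<open>It trades the LIL fluctuation \<open>phi\<close> against
  the linear drift and is where the constant 7 of the theorem comes from.\<close>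
lemma phi_drift_tradeoff:
  fixes K x :: real
  assumes K: "K \<ge> exp (2 * exp 1)" and x: "x \<ge> 1"
  shows "3 * K * phi x - x + 1 \<le> 7 * K\<^sup>2 * ln (ln K)"
proof -
  note Kf = large_constant_facts[OF K]
  have "36 * 1 \<le> K * ln (ln K)" using Kf(1) Kf(4) by (intro mult_mono) auto
  then have "K * 36 \<le> K * (K * ln (ln K))" using Kf(1) by (intro mult_left_mono) auto
  then have K_le: "36 * K \<le> K\<^sup>2 * ln (ln K)" by (simp add: power2_eq_square mult.assoc)
  have "3 * K * phi x \<le> x + 9/2 * K\<^sup>2 * ln (ln K)"
  proof (cases "x \<ge> exp (exp 1)")
    case False
    then have "3 * K * phi x = 3 * K" by (simp add: phi_def)
    then show ?thesis using K_le Kf(1) x by linarith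
  next
    case True
    show ?thesis
    proof (cases "x \<le> K ^ 4")
      case True
      with \<open>x \<ge> exp (exp 1)\<close> show ?thesis by (rule three_K_phi_moderate[OF K])
    next
      case False
      then have "3 * K * phi x \<le> x" using three_K_phi_large Kf(1) \<open>x \<ge> exp (exp 1)\<close> by simp
      then show ?thesis using K_le Kf(1) by linarith
    qed
  qed
  then show ?thesis using K_le Kf(1) by linarith
qed

lemma dep_zero [simp]: "dep U V j 0 = 0"
  by (cases j) auto

lemma dep_unroll:
  "\<exists>i\<le>k. dep U V (Suc j) k \<le> dep U V j i + (\<Sum>l=max i 1..k. V (Suc j) l)"
proof (induction k)
  case 0
  show ?case by (rule exI[of _ 0]) simp
next
  case (Suc k)
  show ?case
  proof (cases "dep U V j (Suc k) \<ge> dep U V (Suc j) k")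
    case True
    then show ?thesis by (intro exI[of _ "Suc k"]) auto
  next
    case False
    from Suc.IH obtain i where i: "i \<le> k"
      "dep U V (Suc j) k \<le> dep U V j i + (\<Sum>l=max i 1..k. V (Suc j) l)" by blast
    have "(\<Sum>l=max i 1..Suc k. V (Suc j) l) = (\<Sum>l=max i 1..k. V (Suc j) l) + V (Suc j) (Suc k)"
      using i(1) by simp
    then show ?thesis using i False by (intro exI[of _ i]) auto
  qed
qed

lemma dep_chain:
  fixes V :: "nat \<Rightarrow> nat \<Rightarrow> real" and s G :: real
  assumes block: "\<forall>j\<in>{1..J}. \<forall>i k. i \<le> k \<longrightarrow> k \<le> n \<longrightarrow>
       (\<Sum>l=max i 1..k. V j l) \<le> real (k - i + 1) * s + 2 * G * phi (real (n - i + 1))"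
    and G: "G \<ge> 0"
  shows "j \<le> J \<Longrightarrow> k \<le> n \<Longrightarrow> \<exists>i\<le>k. dep U V j k \<le> dep U V 0 i + real j * s + real (k - i) * s
            + 2 * real j * G * phi (real (n - i + 1))"
proof (induction j arbitrary: k)
  case 0
  show ?case by (rule exI[of _ k]) simp
next
  case (Suc j)
  obtain i' where i': "i' \<le> k" "dep U V (Suc j) k \<le> dep U V j i' + (\<Sum>l=max i' 1..k. V (Suc j) l)"
    using dep_unroll by blast
  obtain i where i: "i \<le> i'" "dep U V j i' \<le> dep U V 0 i + real j * s + real (i' - i) * s
            + 2 * real j * G * phi (real (n - i + 1))"
    using Suc.IH[of i'] Suc.prems i'(1) by auto
  have b: "(\<Sum>l=max i' 1..k. V (Suc j) l) \<le> real (k - i' + 1) * s + 2 * G * phi (real (n - i' + 1))"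
    using block Suc.prems i'(1) by auto
  have "phi (real (n - i' + 1)) \<le> phi (real (n - i + 1))"
    using i(1) i'(1) Suc.prems by (intro phi_mono) auto
  then have ph: "2 * G * phi (real (n - i' + 1)) \<le> 2 * G * phi (real (n - i + 1))"
    using G by (intro mult_left_mono) auto
  have "real (i' - i) + real (k - i' + 1) = real (k - i) + 1" using i(1) i'(1) by auto
  then have "dep U V (Suc j) k \<le> dep U V 0 i + real (Suc j) * s + real (k - i) * s
            + 2 * real (Suc j) * G * phi (real (n - i + 1))"
    using i'(2) i(2) b ph by (simp add: algebra_simps) (smt (verit) distrib_left)
  then show ?case using i i'(1) by (intro exI[of _ i]) auto
qed

text \<open>A two-sided deviation bound on the tails \<open>a..n\<close> of a service sequence with mean
  \<open>1/\<mu> \<le> s\<close> controls every block \<open>i..k\<close>, as the difference of two tails.\<close>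
lemma block_bound:
  fixes v :: "nat \<Rightarrow> real"
  assumes mu: "\<mu> > 0" and smu: "1 / \<mu> \<le> s" and G: "G \<ge> 0"
    and tails: "\<forall>a\<in>{1..n+1}. \<bar>(\<Sum>l=a..n. v l) - real (n+1-a) / \<mu>\<bar> \<le> G * phi (real (n+1-a))"
    and ik: "i \<le> k" "k \<le> n"
  shows "(\<Sum>l=max i 1..k. v l) \<le> real (k - i + 1) * s + 2 * G * phi (real (n - i + 1))"
proof -
  define a where "a = max i 1"
  have a: "a \<le> k + 1" "1 \<le> a" "i \<le> a" using ik by (auto simp: a_def)
  have split: "(\<Sum>l=a..n. v l) = (\<Sum>l=a..k. v l) + (\<Sum>l=k+1..n. v l)"
    using sum.ub_add_nat[of a k v "n - k"] a ik by simp
  have upper: "(\<Sum>l=a..n. v l) \<le> real (n+1-a) / \<mu> + G * phi (real (n+1-a))"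
    using tails a ik by (auto dest!: bspec[of _ _ a])
  have lower: "(\<Sum>l=k+1..n. v l) \<ge> real (n+1-(k+1)) / \<mu> - G * phi (real (n+1-(k+1)))"
    using tails ik by (auto dest!: bspec[of _ _ "k+1"])
  have mean: "real (n+1-a) / \<mu> - real (n+1-(k+1)) / \<mu> = real (k + 1 - a) * (1 / \<mu>)"
    using a ik by (simp add: diff_divide_distrib[symmetric] of_nat_diff)
  have "real (k + 1 - a) * (1 / \<mu>) \<le> real (k - i + 1) * s"
    using a ik smu mu by (intro mult_mono) auto
  moreover have "G * phi (real (n+1-a)) \<le> G * phi (real (n - i + 1))"
    using a G by (intro mult_left_mono phi_mono) auto
  moreover have "G * phi (real (n+1-(k+1))) \<le> G * phi (real (n - i + 1))"
    using ik G by (intro mult_left_mono phi_mono) auto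
  ultimately show ?thesis using split upper lower mean by (simp add: a_def)
qed

lemma sojourn_drift_bound:
  fixes u :: "nat \<Rightarrow> real" and v :: "nat \<Rightarrow> nat \<Rightarrow> real" and \<mu> :: "nat \<Rightarrow> real"
  assumes lam: "lam > 0" and J: "J \<ge> 1" and s: "s \<ge> 0"
    and mu: "\<forall>j\<in>{1..J}. \<mu> j > 0" and smu: "\<forall>j\<in>{1..J}. 1 / \<mu> j \<le> s"
    and rho: "lam * s < 1" and G: "G \<ge> 0"
    and arrivals: "\<forall>a\<le>n. (\<Sum>l=a+1..n. u l) \<ge> real (n-a) / lam - G * phi (real (n-a))"
    and services: "\<forall>j\<in>{1..J}. \<forall>a\<in>{1..n+1}.
        \<bar>(\<Sum>l=a..n. v j l) - real (n+1-a) / \<mu> j\<bar> \<le> G * phi (real (n+1-a))"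
  shows "\<exists>m. sojourn J u v n \<le> real J / lam + 3 * real J * G * phi (real m + 1) - real m * (1 / lam - s)"
proof -
  have "\<forall>j\<in>{1..J}. \<forall>i k. i \<le> k \<longrightarrow> k \<le> n \<longrightarrow>
       (\<Sum>l=max i 1..k. v j l) \<le> real (k - i + 1) * s + 2 * G * phi (real (n - i + 1))"
    using block_bound mu smu services G by blast
  from dep_chain[OF this G, of J n u] obtain i where i: "i \<le> n"
    "dep u v J n \<le> dep u v 0 i + real J * s + real (n - i) * s + 2 * real J * G * phi (real (n - i + 1))"
    by auto
  define m where "m = n - i"
  have arrival_n: "dep u v 0 n = dep u v 0 i + (\<Sum>l=i+1..n. u l)"
    using sum.ub_add_nat[of 1 i u "n - i"] i(1) by simp
  have "(\<Sum>l=i+1..n. u l) \<ge> real m / lam - G * phi (real m)"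
    using arrivals i(1) by (auto simp: m_def)
  moreover have "G * phi (real m) \<le> real J * G * phi (real m + 1)"
  proof -
    have "G * phi (real m) \<le> 1 * (G * phi (real m + 1))" using G by (simp add: mult_left_mono phi_mono)
    also have "\<dots> \<le> real J * (G * phi (real m + 1))"
      using J G phi_pos[of "real m + 1"] by (intro mult_right_mono) auto
    finally show ?thesis by (simp add: mult.assoc)
  qed
  moreover have "real J * s \<le> real J * (1 / lam)"
    using rho lam by (intro mult_left_mono) (auto simp: field_simps)
  moreover have "real (n - i + 1) = real m + 1" by (simp add: m_def)
  ultimately have "sojourn J u v n \<le> real J / lam + 3 * real J * G * phi (real m + 1) - real m * (1 / lam - s)"
    using i(2) arrival_n unfolding sojourn_def m_def by (simp add: algebra_simps)
  then show ?thesis ..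
qed

text \<open>Deterministic sojourn bound: with \<open>K = J \<lambda> G / (1 - \<lambda> s)\<close> and \<open>G \<ge> exp (2e)/\<lambda>\<close>,
  optimizing the drift trade-off over \<open>m\<close> via \<open>phi_drift_tradeoff\<close> gives the paper's bound.\<close>
lemma sojourn_bound:
  fixes u :: "nat \<Rightarrow> real" and v :: "nat \<Rightarrow> nat \<Rightarrow> real" and \<mu> :: "nat \<Rightarrow> real"
  assumes lam: "lam > 0" and J: "J \<ge> 1" and s: "s \<ge> 0"
    and mu: "\<forall>j\<in>{1..J}. \<mu> j > 0" and smu: "\<forall>j\<in>{1..J}. 1 / \<mu> j \<le> s"
    and rho: "lam * s < 1" and G: "G \<ge> exp (2 * exp 1) / lam"
    and arrivals: "\<forall>a\<le>n. (\<Sum>l=a+1..n. u l) \<ge> real (n-a) / lam - G * phi (real (n-a))"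
    and services: "\<forall>j\<in>{1..J}. \<forall>a\<in>{1..n+1}.
        \<bar>(\<Sum>l=a..n. v j l) - real (n+1-a) / \<mu> j\<bar> \<le> G * phi (real (n+1-a))"
  shows "sojourn J u v n \<le> 7 * (real J)\<^sup>2 * G\<^sup>2 * lam / (1 - lam * s)
            * ln (ln (real J * lam * G / (1 - lam * s))) + real J / lam"
proof -
  have G_pos: "G > 0" using G lam by (smt (verit) divide_pos_pos exp_gt_zero)
  obtain m where m: "sojourn J u v n \<le> real J / lam + 3 * real J * G * phi (real m + 1) - real m * (1 / lam - s)"
    using sojourn_drift_bound[OF lam J s mu smu rho G_pos[THEN less_imp_le] arrivals services] by blast
  define c where "c = 1 / lam - s"
  define K where "K = real J * lam * G / (1 - lam * s)"
  have c_pos: "c > 0" using rho lam by (simp add: c_def field_simps)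
  have Kc: "K * c = real J * G" using rho lam by (simp add: K_def c_def field_simps)
  have "lam * G \<le> real J * lam * G" using J lam G_pos by simp
  also have "\<dots> \<le> K"
    unfolding K_def using rho J lam G_pos s by (simp add: le_divide_eq mult_left_le)
  finally have "lam * G \<le> K" .
  moreover have "exp (2 * exp 1) \<le> lam * G" using G lam by (simp add: field_simps)
  ultimately have "3 * K * phi (real m + 1) - (real m + 1) + 1 \<le> 7 * K\<^sup>2 * ln (ln K)"
    by (intro phi_drift_tradeoff) auto
  then have "c * (3 * K * phi (real m + 1) - real m) \<le> c * (7 * K\<^sup>2 * ln (ln K))"
    using c_pos by (intro mult_left_mono) auto
  then have "3 * (K * c) * phi (real m + 1) - real m * c \<le> 7 * (K * c) * K * ln (ln K)"
    by (simp add: algebra_simps power2_eq_square)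
  then have "3 * real J * G * phi (real m + 1) - real m * c \<le> 7 * (K * c) * K * ln (ln K)"
    unfolding Kc by (simp add: mult.assoc)
  also have "\<dots> = 7 * (real J)\<^sup>2 * G\<^sup>2 * lam / (1 - lam * s) * ln (ln (real J * lam * G / (1 - lam * s)))"
    unfolding Kc using rho by (simp add: K_def power2_eq_square field_simps)
  finally show ?thesis using m by (simp add: c_def)
qed

text \<open>When \<open>\<sigma> = 0\<close>
  the LIL constant degenerates (division by zero), so the sequence is required to be
  constant then; this is the almost-sure situation for a variance-zero sequence.\<close>
lemma lil_deviation:
  fixes f :: "nat \<Rightarrow> real"
  assumes le: "ennreal (sqrt 2 * \<sigma>) * lil_const (\<lambda>k. f k - c) \<sigma> \<le> ennreal G"
    and \<sigma>: "\<sigma> \<ge> 0" and G: "G \<ge> 0" and degenerate: "\<sigma> = 0 \<longrightarrow> (\<forall>k\<ge>1. f k = c)"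
  shows "\<bar>(\<Sum>p=1..m. f p) - real m * c\<bar> \<le> G * phi (real m)"
proof -
  define S where "S = (\<Sum>p=1..m. f p - c)"
  have S_eq: "(\<Sum>p=1..m. f p) - real m * c = S" by (simp add: S_def sum_subtractf)
  have "\<bar>S\<bar> \<le> G * phi (real m)"
  proof (cases "\<sigma> = 0 \<or> m = 0")
    case True
    then have "S = 0" using degenerate unfolding S_def by (auto intro: sum.neutral)
    then show ?thesis using G phi_pos[of "real m"] by simp
  next
    case False
    then have pos: "\<sigma> > 0" "m \<ge> 1" using \<sigma> by auto
    have "ennreal (\<bar>S\<bar> / (\<sigma> * sqrt 2 * phi (real m))) \<le> lil_const (\<lambda>k. f k - c) \<sigma>"
      unfolding lil_const_def S_def using pos by (intro SUP_upper) auto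
    then have "ennreal (sqrt 2 * \<sigma>) * ennreal (\<bar>S\<bar> / (\<sigma> * sqrt 2 * phi (real m))) \<le> ennreal G"
      using le by (meson mult_left_mono order_trans zero_le)
    moreover have "ennreal (sqrt 2 * \<sigma>) * ennreal (\<bar>S\<bar> / (\<sigma> * sqrt 2 * phi (real m)))
        = ennreal (\<bar>S\<bar> / phi (real m))"
      using pos phi_pos[of "real m"] by (subst ennreal_mult[symmetric]) (auto simp: field_simps)
    ultimately have "\<bar>S\<bar> / phi (real m) \<le> G" using G by simp
    then show ?thesis using phi_pos[of "real m"] by (simp add: pos_divide_le_eq)
  qed
  then show ?thesis using S_eq by simp
qed

definition tandem_gamma ::
    "nat \<Rightarrow> real \<Rightarrow> real \<Rightarrow> (nat \<Rightarrow> real) \<Rightarrow> (nat \<Rightarrow> real) \<Rightarrow> (nat \<Rightarrow> real) \<Rightarrow> (nat \<Rightarrow> nat \<Rightarrow> real) \<Rightarrow> ennreal"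
  where "tandem_gamma J lam \<sigma>a \<mu> \<sigma>s u v =
    Max ({ennreal (sqrt 2 * \<sigma>a) * lil_const (\<lambda>k. u k - 1 / lam) \<sigma>a, ennreal (exp (2 * exp 1) / lam)}
      \<union> {ennreal (sqrt 2 * \<sigma>s j) * lil_const (\<lambda>k. v j k - 1 / \<mu> j) (\<sigma>s j) | j. j \<in> {1..J}})"

lemma tandem_gamma_ge:
  shows "ennreal (sqrt 2 * \<sigma>a) * lil_const (\<lambda>k. u k - 1 / lam) \<sigma>a \<le> tandem_gamma J lam \<sigma>a \<mu> \<sigma>s u v"
    and "ennreal (exp (2 * exp 1) / lam) \<le> tandem_gamma J lam \<sigma>a \<mu> \<sigma>s u v"
    and "j \<in> {1..J} \<Longrightarrow>
      ennreal (sqrt 2 * \<sigma>s j) * lil_const (\<lambda>k. v j k - 1 / \<mu> j) (\<sigma>s j) \<le> tandem_gamma J lam \<sigma>a \<mu> \<sigma>s u v"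
  unfolding tandem_gamma_def by (rule Max_ge; auto simp: Setcompr_eq_image)+

lemma rev_sum:
  fixes f :: "nat \<Rightarrow> real"
  assumes "a \<le> n"
  shows "(\<Sum>l=a+1..n. f (n+1-l)) = (\<Sum>p=1..n-a. f p)"
  using assms by (intro sum.reindex_bij_witness[of _ "\<lambda>p. n+1-p" "\<lambda>l. n+1-l"]) auto

text \<open>Pathwise bound for the time-reversed network (jobs \<open>n, n-1, ..., 1\<close>): the tails of the
  reversed sequences are initial partial sums of the original ones, which the LIL constants
  collected in \<open>tandem_gamma\<close> control.\<close>
lemma reversed_sojourn_bound:
  fixes u :: "nat \<Rightarrow> real" and v :: "nat \<Rightarrow> nat \<Rightarrow> real" and \<mu> \<sigma>s :: "nat \<Rightarrow> real"
  assumes lam: "lam > 0" and J: "J \<ge> 1" and mu: "\<forall>j\<in>{1..J}. \<mu> j > 0"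
    and \<sigma>a: "\<sigma>a \<ge> 0" and \<sigma>s: "\<forall>j\<in>{1..J}. \<sigma>s j \<ge> 0"
    and rho: "lam / Min (\<mu> ` {1..J}) < 1"
    and u_degenerate: "\<sigma>a = 0 \<longrightarrow> (\<forall>k\<ge>1. u k = 1 / lam)"
    and v_degenerate: "\<forall>j\<in>{1..J}. \<sigma>s j = 0 \<longrightarrow> (\<forall>k\<ge>1. v j k = 1 / \<mu> j)"
  shows "ennreal (sojourn J (\<lambda>k. u (n+1-k)) (\<lambda>j k. v j (n+1-k)) n)
          \<le> tandem_bound J lam (lam / Min (\<mu> ` {1..J})) (tandem_gamma J lam \<sigma>a \<mu> \<sigma>s u v)
             + ennreal (real J / lam)"
proof (cases "tandem_gamma J lam \<sigma>a \<mu> \<sigma>s u v = \<top>")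
  case True
  then show ?thesis by (simp add: tandem_bound_def)
next
  case False
  then obtain G where \<Gamma>: "tandem_gamma J lam \<sigma>a \<mu> \<sigma>s u v = ennreal G" and G: "G \<ge> 0"
    using ennreal_cases[of "tandem_gamma J lam \<sigma>a \<mu> \<sigma>s u v"] by auto
  note \<Gamma>_ge = tandem_gamma_ge[where J=J and lam=lam and \<sigma>a=\<sigma>a and \<mu>=\<mu> and \<sigma>s=\<sigma>s and u=u and v=v,
      unfolded \<Gamma>]
  define s where "s = 1 / Min (\<mu> ` {1..J})"
  have fin: "finite (\<mu> ` {1..J})" "\<mu> ` {1..J} \<noteq> {}" using J by auto
  have min_pos: "Min (\<mu> ` {1..J}) > 0" using Min_in[OF fin] mu by auto
  have s_ge: "\<forall>j\<in>{1..J}. 1 / \<mu> j \<le> s"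
    unfolding s_def using min_pos fin by (auto intro!: divide_left_mono Min_le)
  have G_ge: "G \<ge> exp (2 * exp 1) / lam" using \<Gamma>_ge(2) G by simp
  have "\<forall>a\<le>n. (\<Sum>l=a+1..n. u (n+1-l)) \<ge> real (n-a) / lam - G * phi (real (n-a))"
  proof (intro allI impI)
    fix a assume "a \<le> n"
    then show "(\<Sum>l=a+1..n. u (n+1-l)) \<ge> real (n-a) / lam - G * phi (real (n-a))"
      using lil_deviation[OF \<Gamma>_ge(1) \<sigma>a G u_degenerate, of "n-a"] rev_sum[of a n u]
      by (simp add: abs_le_iff)
  qed
  moreover have "\<forall>j\<in>{1..J}. \<forall>a\<in>{1..n+1}.
      \<bar>(\<Sum>l=a..n. v j (n+1-l)) - real (n+1-a) / \<mu> j\<bar> \<le> G * phi (real (n+1-a))"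
  proof (intro ballI)
    fix j a assume j: "j \<in> {1..J}" and a: "a \<in> {1..n+1}"
    have "a - 1 \<le> n" "a - 1 + 1 = a" "n - (a - 1) = n + 1 - a" using a by auto
    then have "(\<Sum>l=a..n. v j (n+1-l)) = (\<Sum>p=1..n+1-a. v j p)"
      using rev_sum[of "a - 1" n "v j"] by simp
    then show "\<bar>(\<Sum>l=a..n. v j (n+1-l)) - real (n+1-a) / \<mu> j\<bar> \<le> G * phi (real (n+1-a))"
      using lil_deviation[OF \<Gamma>_ge(3)[OF j], of "n+1-a"] \<sigma>s v_degenerate j G by simp
  qed
  ultimately have "sojourn J (\<lambda>k. u (n+1-k)) (\<lambda>j k. v j (n+1-k)) n
      \<le> 7 * (real J)\<^sup>2 * G\<^sup>2 * lam / (1 - lam * s) * ln (ln (real J * lam * G / (1 - lam * s)))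
         + real J / lam"
    using sojourn_bound[OF lam J _ mu s_ge _ G_ge] min_pos rho by (simp add: s_def)
  then show ?thesis
    using G lam by (simp add: \<Gamma> tandem_bound_def s_def ennreal_plus_if ennreal_leI)
qed

lemma (in prob_space) nn_integral_reindex_indep:
  fixes X :: "'i \<Rightarrow> 'a \<Rightarrow> real" and h :: "('i \<Rightarrow> real) \<Rightarrow> ennreal"
  assumes I: "finite I" "I \<noteq> {}"
    and rv: "\<forall>i\<in>I. X i \<in> borel_measurable M"
    and ind: "indep_vars (\<lambda>_. borel) X I"
    and t: "t \<in> I \<rightarrow> I" "inj_on t I"
    and marginals: "\<forall>i\<in>I. distr M borel (X (t i)) = distr M borel (X i)"
    and h: "h \<in> borel_measurable (PiM I (\<lambda>_. borel))"
  shows "(\<integral>\<^sup>+x. h (\<lambda>i\<in>I. X i x) \<partial>M) = (\<integral>\<^sup>+x. h (\<lambda>i\<in>I. X (t i) x) \<partial>M)"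
proof -
  let ?N = "PiM I (\<lambda>_. borel :: real measure)"
  define Mi where "Mi i = distr M borel (X i)" for i
  define P where "P = PiM I Mi"
  define f where "f x = (\<lambda>i\<in>I. X i x)" for x
  define g where "g \<omega> = (\<lambda>i\<in>I. \<omega> (t i) :: real)" for \<omega>
  have f: "f \<in> measurable M ?N" unfolding f_def using rv by (intro measurable_restrict) auto
  have law: "distr M ?N f = P" unfolding P_def Mi_def f_def
    using indep_vars_iff_distr_eq_PiM'[where I=I and M'="\<lambda>_. borel" and X=X] I rv ind by auto
  have sets_P: "sets P = sets ?N" unfolding P_def Mi_def by (intro sets_PiM_cong) auto
  have "g \<in> measurable ?N ?N" unfolding g_def using t
    by (intro measurable_restrict measurable_component_singleton) auto
  then have g: "g \<in> measurable P P" by (simp add: measurable_cong_sets[OF sets_P sets_P])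
  have hP: "h \<in> borel_measurable P" using h by (simp add: measurable_cong_sets[OF sets_P refl])
  have "PiM I (\<lambda>i. Mi (t i)) = P" unfolding P_def
    using marginals t by (intro PiM_cong) (auto simp: Mi_def)
  moreover have "\<And>i. i \<in> I \<Longrightarrow> prob_space (Mi i)" using rv unfolding Mi_def
    by (auto intro: prob_space_distr)
  ultimately have invariant: "distr P P g = P"
    using distr_PiM_reindex[where K=I and M=Mi and f=t and I=I] t unfolding g_def P_def by simp
  have "(\<integral>\<^sup>+x. h (f x) \<partial>M) = (\<integral>\<^sup>+\<omega>. h \<omega> \<partial>distr P P g)"
    using nn_integral_distr[OF f, of h] hP law invariant by simp
  also have "\<dots> = (\<integral>\<^sup>+\<omega>. h (g \<omega>) \<partial>distr M ?N f)" using nn_integral_distr[OF g, of h] hP law by simp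
  also have "\<dots> = (\<integral>\<^sup>+x. h (g (f x)) \<partial>M)"
    using nn_integral_distr[OF f, of "\<lambda>\<omega>. h (g \<omega>)"] measurable_compose[OF g hP] law by simp
  also have "(\<lambda>x. g (f x)) = (\<lambda>x. \<lambda>i\<in>I. X (t i) x)"
    unfolding f_def g_def using t by (auto simp: fun_eq_iff restrict_def)
  finally show ?thesis by (simp add: f_def restrict_def)
qed

lemma dep_cong:
  assumes "\<forall>k\<in>{1..n}. u k = u' k" "\<forall>j\<in>{1..J}. \<forall>k\<in>{1..n}. v j k = v' j k"
  shows "j \<le> J \<Longrightarrow> k \<le> n \<Longrightarrow> dep u v j k = dep u' v' j k"
proof (induction j arbitrary: k)
  case 0
  then show ?case using assms(1) by (auto intro!: sum.cong)
next
  case (Suc j)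
  note previous_station = Suc.IH
  show ?case using Suc.prems
  proof (induction k)
    case (Suc k)
    then show ?case using previous_station[of "Suc k"] assms(2) by auto
  qed simp
qed

lemma sojourn_cong:
  assumes "\<forall>k\<in>{1..n}. u k = u' k" "\<forall>j\<in>{1..J}. \<forall>k\<in>{1..n}. v j k = v' j k"
  shows "sojourn J u v n = sojourn J u' v' n"
  using dep_cong[OF assms, where j=J and k=n] dep_cong[OF assms, where j=0 and k=n]
  by (simp add: sojourn_def)

lemma component_measurable:
  "(\<lambda>\<omega>. \<omega> i) \<in> borel_measurable (PiM I (\<lambda>_. borel :: real measure))"
proof (cases "i \<in> I")
  case False
  then have "(\<lambda>\<omega>. \<omega> i) \<in> borel_measurable (PiM I (\<lambda>_. borel :: real measure)) \<longleftrightarrow>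
        (\<lambda>\<omega>. undefined :: real) \<in> borel_measurable (PiM I (\<lambda>_. borel :: real measure))"
    by (intro measurable_cong) (auto simp: space_PiM PiE_def extensional_def)
  then show ?thesis by simp
qed (rule measurable_component_singleton)

lemma dep_measurable:
  "(\<lambda>\<omega>. dep (\<lambda>k. \<omega> (Inl k)) (\<lambda>j k. \<omega> (Inr (j, k))) j k) \<in> borel_measurable (PiM I (\<lambda>_. borel :: real measure))"
proof (induction j arbitrary: k)
  case 0
  show ?case by (simp add: component_measurable borel_measurable_sum)
next
  case (Suc j)
  note previous_station = Suc.IH
  show ?case
  proof (induction k)
    case (Suc k)
    show ?case unfolding dep.simps
      by (intro borel_measurable_add borel_measurable_max Suc.IH previous_station component_measurable)
  qed simp
qed

lemma sojourn_measurable: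
  "(\<lambda>\<omega>. ennreal (sojourn J (\<lambda>k. \<omega> (Inl k)) (\<lambda>j k. \<omega> (Inr (j, k))) n))
     \<in> borel_measurable (PiM I (\<lambda>_. borel :: real measure))"
  unfolding sojourn_def
  by (intro measurable_compose[OF _ measurable_ennreal] borel_measurable_diff dep_measurable)

lemma (in prob_space) expected_sojourn_reversed:
  fixes U :: "nat \<Rightarrow> 'a \<Rightarrow> real" and V :: "nat \<Rightarrow> nat \<Rightarrow> 'a \<Rightarrow> real"
  assumes n: "n \<ge> 1"
    and indep: "indep_vars (\<lambda>_. borel) (\<lambda>i. case i of Inl k \<Rightarrow> U k | Inr (j, k) \<Rightarrow> V j k)
                  (Inl ` {1..} \<union> Inr ` ({1..J} \<times> {1..}))"
    and U_meas: "\<forall>k\<ge>1. U k \<in> borel_measurable M"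
    and V_meas: "\<forall>j\<in>{1..J}. \<forall>k\<ge>1. V j k \<in> borel_measurable M"
    and U_id: "\<forall>k\<ge>1. distr M borel (U k) = distr M borel (U 1)"
    and V_id: "\<forall>j\<in>{1..J}. \<forall>k\<ge>1. distr M borel (V j k) = distr M borel (V j 1)"
  shows "(\<integral>\<^sup>+x. ennreal (sojourn J (\<lambda>k. U k x) (\<lambda>j k. V j k x) n) \<partial>M)
       = (\<integral>\<^sup>+x. ennreal (sojourn J (\<lambda>k. U (n+1-k) x) (\<lambda>j k. V j (n+1-k) x) n) \<partial>M)"
proof -
  define I where "I = Inl ` {1..n} \<union> Inr ` ({1..J} \<times> {1..n})"
  define X where "X = (\<lambda>i. case i of Inl k \<Rightarrow> U k | Inr (j, k) \<Rightarrow> V j k)"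
  define t :: "nat + nat \<times> nat \<Rightarrow> nat + nat \<times> nat"
    where "t = map_sum (\<lambda>k. n + 1 - k) (\<lambda>(j, k). (j, n + 1 - k))"
  define h where "h = (\<lambda>\<omega>. ennreal (sojourn J (\<lambda>k. \<omega> (Inl k)) (\<lambda>j k. \<omega> (Inr (j, k))) n))"
  have "(\<integral>\<^sup>+x. h (\<lambda>i\<in>I. X i x) \<partial>M) = (\<integral>\<^sup>+x. h (\<lambda>i\<in>I. X (t i) x) \<partial>M)"
  proof (rule nn_integral_reindex_indep)
    show "finite I" "I \<noteq> {}" using n by (auto simp: I_def)
    show "\<forall>i\<in>I. X i \<in> borel_measurable M" using U_meas V_meas by (auto simp: I_def X_def)
    show "indep_vars (\<lambda>_. borel) X I"
      using indep unfolding X_def by (rule indep_vars_subset) (auto simp: I_def)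
    show "t \<in> I \<rightarrow> I" by (auto simp: I_def t_def image_iff)
    show "inj_on t I" by (auto simp: inj_on_def I_def t_def)
    show "\<forall>i\<in>I. distr M borel (X (t i)) = distr M borel (X i)"
    proof
      fix i assume "i \<in> I"
      then consider (arrival) k where "i = Inl k" "k \<in> {1..n}"
        | (service) j k where "i = Inr (j, k)" "j \<in> {1..J}" "k \<in> {1..n}"
        by (auto simp: I_def)
      then show "distr M borel (X (t i)) = distr M borel (X i)"
      proof cases
        case arrival
        then have "X (t i) = U (n+1-k)" "X i = U k" "k \<ge> 1" "n+1-k \<ge> 1" by (auto simp: X_def t_def)
        then show ?thesis using U_id by metis
      next
        case service
        then have "X (t i) = V j (n+1-k)" "X i = V j k" "k \<ge> 1" "n+1-k \<ge> 1" "j \<in> {1..J}"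
          by (auto simp: X_def t_def)
        then show ?thesis using V_id by metis
      qed
    qed
    show "h \<in> borel_measurable (PiM I (\<lambda>_. borel))" unfolding h_def by (rule sojourn_measurable)
  qed
  moreover have "(\<integral>\<^sup>+x. h (\<lambda>i\<in>I. X i x) \<partial>M) = (\<integral>\<^sup>+x. ennreal (sojourn J (\<lambda>k. U k x) (\<lambda>j k. V j k x) n) \<partial>M)"
    unfolding h_def by (intro nn_integral_cong arg_cong[where f=ennreal] sojourn_cong) (auto simp: I_def X_def)
  moreover have "(\<integral>\<^sup>+x. h (\<lambda>i\<in>I. X (t i) x) \<partial>M)
      = (\<integral>\<^sup>+x. ennreal (sojourn J (\<lambda>k. U (n+1-k) x) (\<lambda>j k. V j (n+1-k) x) n) \<partial>M)"
    unfolding h_def by (intro nn_integral_cong arg_cong[where f=ennreal] sojourn_cong) (auto simp: I_def X_def t_def)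
  ultimately show ?thesis by simp
qed

lemma (in prob_space) AE_constant_if_variance_zero:
  fixes Y :: "nat \<Rightarrow> 'a \<Rightarrow> real"
  assumes meas: "\<forall>k\<ge>1. Y k \<in> borel_measurable M"
    and ident: "\<forall>k\<ge>1. distr M borel (Y k) = distr M borel (Y 1)"
    and sq: "integrable M (\<lambda>x. (Y 1 x)\<^sup>2)"
    and mean: "expectation (Y 1) = c" and var: "variance (Y 1) = \<sigma>\<^sup>2"
  shows "AE x in M. \<sigma> = 0 \<longrightarrow> (\<forall>k\<ge>1. Y k x = c)"
proof (cases "\<sigma> = 0")
  case True
  have Y1: "Y 1 \<in> borel_measurable M" using meas by simp
  have "integrable M (\<lambda>x. (Y 1 x - c)\<^sup>2)"
    using sq square_integrable_imp_integrable[OF Y1 sq] by (simp add: power2_diff)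
  moreover have "(\<integral>x. (Y 1 x - c)\<^sup>2 \<partial>M) = 0" using var True mean by simp
  ultimately have "AE x in M. (Y 1 x - c)\<^sup>2 = 0" by (subst (asm) integral_nonneg_eq_0_iff_AE) auto
  then have law: "AE y in distr M borel (Y 1). y = c" using Y1 by (simp add: AE_distr_iff)
  have "AE x in M. k \<ge> 1 \<longrightarrow> Y k x = c" for k
  proof (cases "k \<ge> 1")
    case True
    have "AE y in distr M borel (Y k). y = c" unfolding ident[rule_format, OF True] by (rule law)
    then show ?thesis using meas True by (simp add: AE_distr_iff)
  qed simp
  then have "AE x in M. \<forall>k. k \<ge> 1 \<longrightarrow> Y k x = c" by (intro AE_all_countable[THEN iffD2] allI)
  then show ?thesis by (rule eventually_mono) simp
qed simp

lemma lil_const_measurable: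
  assumes "\<forall>k\<ge>1. f k \<in> borel_measurable M"
  shows "(\<lambda>x. lil_const (\<lambda>k. f k x - c) \<sigma>) \<in> borel_measurable M"
  unfolding lil_const_def using assms
  by (intro borel_measurable_SUP measurable_compose[OF _ measurable_ennreal] borel_measurable_divide
      borel_measurable_abs borel_measurable_sum borel_measurable_diff) auto

lemma tandem_gamma_measurable:
  fixes U :: "nat \<Rightarrow> 'a \<Rightarrow> real" and V :: "nat \<Rightarrow> nat \<Rightarrow> 'a \<Rightarrow> real"
  assumes J: "J \<ge> 1"
    and U_meas: "\<forall>k\<ge>1. U k \<in> borel_measurable M"
    and V_meas: "\<forall>j\<in>{1..J}. \<forall>k\<ge>1. V j k \<in> borel_measurable M"
  shows "(\<lambda>x. tandem_gamma J lam \<sigma>a \<mu> \<sigma>s (\<lambda>k. U k x) (\<lambda>j k. V j k x)) \<in> borel_measurable M"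
proof -
  have set_eq: "\<And>a b f. {a, b} \<union> {f j | j. j \<in> {1..J}} = insert a (insert b (f ` {1..J}))" by auto
  have "\<And>x. tandem_gamma J lam \<sigma>a \<mu> \<sigma>s (\<lambda>k. U k x) (\<lambda>j k. V j k x)
      = max (ennreal (sqrt 2 * \<sigma>a) * lil_const (\<lambda>k. U k x - 1 / lam) \<sigma>a)
         (max (ennreal (exp (2 * exp 1) / lam))
           (Max ((\<lambda>j. ennreal (sqrt 2 * \<sigma>s j) * lil_const (\<lambda>k. V j k x - 1 / \<mu> j) (\<sigma>s j)) ` {1..J})))"
    using J unfolding tandem_gamma_def set_eq by (simp add: Max_insert)
  moreover have "(\<lambda>x. lil_const (\<lambda>k. U k x - 1 / lam) \<sigma>a) \<in> borel_measurable M"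
    using U_meas by (intro lil_const_measurable) auto
  moreover have "\<And>j. j \<in> {1..J} \<Longrightarrow> (\<lambda>x. lil_const (\<lambda>k. V j k x - 1 / \<mu> j) (\<sigma>s j)) \<in> borel_measurable M"
    using V_meas by (intro lil_const_measurable) auto
  ultimately show ?thesis by simp measurable
qed

lemma tandem_bound_measurable: "tandem_bound J lam \<rho> \<in> borel_measurable borel"
  unfolding tandem_bound_def Let_def by measurable

text \<open>Taking expectations in \<open>reversed_sojourn_bound\<close>: almost surely the degenerate
  sequences are constant, so the pathwise bound holds almost surely and integrates.\<close>
lemma (in prob_space) expected_reversed_sojourn_bound:
  fixes U :: "nat \<Rightarrow> 'a \<Rightarrow> real" and V :: "nat \<Rightarrow> nat \<Rightarrow> 'a \<Rightarrow> real" and \<mu> \<sigma>s :: "nat \<Rightarrow> real"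
  assumes lam: "lam > 0" and J: "J \<ge> 1" and mu: "\<forall>j\<in>{1..J}. \<mu> j > 0"
    and \<sigma>a: "\<sigma>a \<ge> 0" and \<sigma>s: "\<forall>j\<in>{1..J}. \<sigma>s j \<ge> 0"
    and rho: "lam / Min (\<mu> ` {1..J}) < 1"
    and U_meas: "\<forall>k\<ge>1. U k \<in> borel_measurable M"
    and V_meas: "\<forall>j\<in>{1..J}. \<forall>k\<ge>1. V j k \<in> borel_measurable M"
    and U_degenerate: "AE x in M. \<sigma>a = 0 \<longrightarrow> (\<forall>k\<ge>1. U k x = 1 / lam)"
    and V_degenerate: "AE x in M. \<forall>j\<in>{1..J}. \<sigma>s j = 0 \<longrightarrow> (\<forall>k\<ge>1. V j k x = 1 / \<mu> j)"
  shows "(\<integral>\<^sup>+ x. ennreal (sojourn J (\<lambda>k. U (n+1-k) x) (\<lambda>j k. V j (n+1-k) x) n) \<partial>M)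
      \<le> (\<integral>\<^sup>+ x. tandem_bound J lam (lam / Min (\<mu> ` {1..J}))
              (tandem_gamma J lam \<sigma>a \<mu> \<sigma>s (\<lambda>k. U k x) (\<lambda>j k. V j k x)) \<partial>M)
         + ennreal (real J / lam)"
    (is "_ \<le> (\<integral>\<^sup>+ x. ?B x \<partial>M) + _")
proof -
  have "AE x in M. ennreal (sojourn J (\<lambda>k. U (n+1-k) x) (\<lambda>j k. V j (n+1-k) x) n)
      \<le> ?B x + ennreal (real J / lam)"
    using U_degenerate V_degenerate
  proof eventually_elim
    case (elim x)
    then show ?case by (rule reversed_sojourn_bound[OF lam J mu \<sigma>a \<sigma>s rho])
  qed
  then have "(\<integral>\<^sup>+ x. ennreal (sojourn J (\<lambda>k. U (n+1-k) x) (\<lambda>j k. V j (n+1-k) x) n) \<partial>M)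
      \<le> (\<integral>\<^sup>+ x. ?B x + ennreal (real J / lam) \<partial>M)"
    by (rule nn_integral_mono_AE)
  moreover have "?B \<in> borel_measurable M"
    by (rule measurable_compose[OF tandem_gamma_measurable[OF J U_meas V_meas] tandem_bound_measurable])
  ultimately show ?thesis by (simp add: nn_integral_add emeasure_space_1)
qed

theorem corollary1:
  fixes M :: "'a measure"
    and J :: nat
    and U :: "nat \<Rightarrow> 'a \<Rightarrow> real"
    and V :: "nat \<Rightarrow> nat \<Rightarrow> 'a \<Rightarrow> real"
    and lam \<sigma>a :: real
    and \<mu> \<sigma>s :: "nat \<Rightarrow> real"
  defines "\<mu>min \<equiv> Min (\<mu> ` {1..J})"
  defines "\<rho> \<equiv> lam / \<mu>min"
  defines "\<Gamma> \<equiv> (\<lambda>x. Max ({ennreal (sqrt 2 * \<sigma>a) * lil_const (\<lambda>k. U k x - 1 / lam) \<sigma>a,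
                              ennreal (exp (2 * exp 1) / lam)}
                      \<union> {ennreal (sqrt 2 * \<sigma>s j) * lil_const (\<lambda>k. V j k x - 1 / \<mu> j) (\<sigma>s j) | j. j \<in> {1..J}}))"
  defines "W \<equiv> (\<lambda>n x. sojourn J (\<lambda>k. U k x) (\<lambda>j k. V j k x) n)"
  assumes M: "prob_space M"
    and J: "J \<ge> 1"
    and lam: "lam > 0" and mu: "\<forall>j\<in>{1..J}. \<mu> j > 0"
    and sa: "\<sigma>a \<ge> 0" and ss: "\<forall>j\<in>{1..J}. \<sigma>s j \<ge> 0"
    and indep: "prob_space.indep_vars M (\<lambda>_. borel)
                  (\<lambda>i. case i of Inl k \<Rightarrow> U k | Inr (j, k) \<Rightarrow> V j k)
                  (Inl ` {1..} \<union> Inr ` ({1..J} \<times> {1..}))"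
    and U_meas: "\<forall>k\<ge>1. U k \<in> borel_measurable M"
    and V_meas: "\<forall>j\<in>{1..J}. \<forall>k\<ge>1. V j k \<in> borel_measurable M"
    and U_id: "\<forall>k\<ge>1. distr M borel (U k) = distr M borel (U 1)"
    and V_id: "\<forall>j\<in>{1..J}. \<forall>k\<ge>1. distr M borel (V j k) = distr M borel (V j 1)"
    and U_nonneg: "\<forall>k\<ge>1. AE x in M. U k x \<ge> 0"
    and V_nonneg: "\<forall>j\<in>{1..J}. \<forall>k\<ge>1. AE x in M. V j k x \<ge> 0"
    and U_sq: "integrable M (\<lambda>x. (U 1 x)\<^sup>2)"
    and V_sq: "\<forall>j\<in>{1..J}. integrable M (\<lambda>x. (V j 1 x)\<^sup>2)"
    and U_mean: "prob_space.expectation M (U 1) = 1 / lam"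
    and V_mean: "\<forall>j\<in>{1..J}. prob_space.expectation M (V j 1) = 1 / \<mu> j"
    and U_var: "prob_space.variance M (U 1) = \<sigma>a\<^sup>2"
    and V_var: "\<forall>j\<in>{1..J}. prob_space.variance M (V j 1) = (\<sigma>s j)\<^sup>2"
    and stable: "\<rho> < 1"
  shows "(\<forall>n\<ge>1. (\<integral>\<^sup>+ x. ennreal (W n x) \<partial>M)
                 \<le> (\<integral>\<^sup>+ x. tandem_bound J lam \<rho> (\<Gamma> x) \<partial>M) + ennreal (real J / lam))
       \<and> (\<forall>(N :: 'b measure) Winf. prob_space N \<longrightarrow> Winf \<in> borel_measurable N
            \<longrightarrow> (\<forall>x\<in>space N. Winf x \<ge> 0)
            \<longrightarrow> (\<lambda>n. \<integral>\<^sup>+ x. ennreal (W n x) \<partial>M) \<longlonglongrightarrow> (\<integral>\<^sup>+ x. ennreal (Winf x) \<partial>N)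
            \<longrightarrow> (\<integral>\<^sup>+ x. ennreal (Winf x) \<partial>N)
                 \<le> (\<integral>\<^sup>+ x. tandem_bound J lam \<rho> (\<Gamma> x) \<partial>M) + ennreal (real J / lam))"
proof -
  interpret prob_space M by (rule M)
  have \<Gamma>_eq: "\<Gamma> = (\<lambda>x. tandem_gamma J lam \<sigma>a \<mu> \<sigma>s (\<lambda>k. U k x) (\<lambda>j k. V j k x))"
    unfolding \<Gamma>_def tandem_gamma_def ..
  have U_degenerate: "AE x in M. \<sigma>a = 0 \<longrightarrow> (\<forall>k\<ge>1. U k x = 1 / lam)"
    by (rule AE_constant_if_variance_zero[OF U_meas U_id U_sq U_mean U_var])
  have V_degenerate: "AE x in M. \<forall>j\<in>{1..J}. \<sigma>s j = 0 \<longrightarrow> (\<forall>k\<ge>1. V j k x = 1 / \<mu> j)"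
  proof (rule AE_finite_allI)
    fix j assume j: "j \<in> {1..J}"
    show "AE x in M. \<sigma>s j = 0 \<longrightarrow> (\<forall>k\<ge>1. V j k x = 1 / \<mu> j)"
      using bspec[OF V_meas j] bspec[OF V_id j] bspec[OF V_sq j] bspec[OF V_mean j] bspec[OF V_var j]
      by (rule AE_constant_if_variance_zero)
  qed simp
  have finite_time: "(\<integral>\<^sup>+ x. ennreal (W n x) \<partial>M)
      \<le> (\<integral>\<^sup>+ x. tandem_bound J lam \<rho> (\<Gamma> x) \<partial>M) + ennreal (real J / lam)" if n: "n \<ge> 1" for n
    unfolding W_def expected_sojourn_reversed[OF n indep U_meas V_meas U_id V_id] \<Gamma>_eq \<rho>_def \<mu>min_def
    using expected_reversed_sojourn_bound[OF lam J mu sa ss stable[unfolded \<rho>_def \<mu>min_def]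
        U_meas V_meas U_degenerate V_degenerate] .
  then show ?thesis by (blast intro: LIMSEQ_le_const2)
qed

end
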